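(* Let $\delta>0$, let $X$ be a geodesic $\delta$--hyperbolic space on which a group $G$ acts by isometries, let $U\subset G$ be finite, let $x_0\in X$ satisfy $\frac1{|U|}\sum_{u\in U}|ux_0-x_0|\leqslant E(U)+\delta$, and let $d$ be either $1$ or $\log_2(2|U|)$. Let $y_0\in S(x_0,1000d\delta)$ and let $B(y_0,100d\delta)$ be the closed ball of radius $100d\delta$ about $y_0$. Then $$\left|\bigcup_{y,z\in B(y_0,100d\delta)\cap S(x_0,1000d\delta)}U_{y,z}\right|\leqslant\frac23|U|.$$
   Context: Distance $|x-y|$; Gromov product $(p,q)_x=\frac12(|p-x|+|q-x|-|p-q|)$; $X$ is $\delta$--hyperbolic if $(p,r)_x\geqslant\min\{(p,q)_x,(q,r)_x\}-\delta$ for all $p,q,r,x$. $E(U):=\inf_{x\in X}\frac1{|U|}\sum_{u\in U}|ux-x|$. $S(x_0,R):=\{x\mid|x-x_0|=R\}$. For $y,z\in S(x_0,1000d\delta)$, $U_{y,z}:=\{u\in U\mid |ux_0-x_0|\geqslant4000d\delta,\ (x_0,ux_0)_y\leqslant d\delta,\ (x_0,u^{-1}x_0)_z\leqslant d\delta\}$. *)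

theory Defs
  imports "HOL-Analysis.Analysis" "HOL-Algebra.Group_Action"
begin

definition gromov_product :: "'a::metric_space \<Rightarrow> 'a \<Rightarrow> 'a \<Rightarrow> real" where
  "gromov_product p q x = (dist p x + dist q x - dist p q) / 2"

definition delta_hyperbolic :: "real \<Rightarrow> 'a::metric_space itself \<Rightarrow> bool" where
  "delta_hyperbolic \<delta> _ \<longleftrightarrow>
     (\<forall>p q r x :: 'a. gromov_product p r x \<ge> min (gromov_product p q x) (gromov_product q r x) - \<delta>)"

definition geodesic_space :: "'a::metric_space itself \<Rightarrow> bool" where
  "geodesic_space _ \<longleftrightarrow>
     (\<forall>x y :: 'a. \<exists>\<gamma> :: real \<Rightarrow> 'a. \<gamma> 0 = x \<and> \<gamma> (dist x y) = y \<and>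
        (\<forall>s\<in>{0..dist x y}. \<forall>t\<in>{0..dist x y}. dist (\<gamma> s) (\<gamma> t) = \<bar>s - t\<bar>))"

definition isometric_action :: "('g, 'b) monoid_scheme \<Rightarrow> ('g \<Rightarrow> 'a::metric_space \<Rightarrow> 'a) \<Rightarrow> bool" where
  "isometric_action G \<phi> \<longleftrightarrow> group G \<and> group_action G UNIV \<phi> \<and>
     (\<forall>g\<in>carrier G. \<forall>x y. dist (\<phi> g x) (\<phi> g y) = dist x y)"

definition energy :: "('g \<Rightarrow> 'a::metric_space \<Rightarrow> 'a) \<Rightarrow> 'g set \<Rightarrow> real" where
  "energy \<phi> U = (INF x. (\<Sum>u\<in>U. dist (\<phi> u x) x) / real (card U))"

definition sphere_at :: "'a::metric_space \<Rightarrow> real \<Rightarrow> 'a set" where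
  "sphere_at x0 R = {x. dist x x0 = R}"

definition U_yz :: "('g, 'b) monoid_scheme \<Rightarrow> ('g \<Rightarrow> 'a::metric_space \<Rightarrow> 'a) \<Rightarrow> 'g set
    \<Rightarrow> 'a \<Rightarrow> real \<Rightarrow> real \<Rightarrow> 'a \<Rightarrow> 'a \<Rightarrow> 'g set" where
  "U_yz G \<phi> U x0 d \<delta> y z = {u\<in>U. dist (\<phi> u x0) x0 \<ge> 4000 * d * \<delta> \<and>
      gromov_product x0 (\<phi> u x0) y \<le> d * \<delta> \<and>
      gromov_product x0 (\<phi> (inv\<^bsub>G\<^esub> u) x0) z \<le> d * \<delta>}"

end

theory Submission
  imports Defs
begin

text \<open>
  Moving the base point from x0 to y0 changes every displacement by at most
  2|x0 - y0| = 2000 d\<delta>. For u in some U_{y,z} with y, z near y0, however, y lies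
  near the beginning and u z near the end of a geodesic from x0 to u x0, each at
  distance 1000 d\<delta> from its endpoint, so hyperbolicity gives
  |u y0 - y0| \<le> |u x0 - x0| - 1794 d\<delta>. If more than two thirds of U had this
  property, the mean displacement at y0 would undercut the one at x0 by more than
  \<delta>, contradicting the almost-minimality of x0.
\<close>

lemma gromov_product_commute: "gromov_product p q x = gromov_product q p x"
  unfolding gromov_product_def by (simp add: dist_commute)

lemma gromov_product_nonneg: "gromov_product p q x \<ge> 0"
  unfolding gromov_product_def using dist_triangle[of p q x] by (simp add: dist_commute)

lemma delta_hyperbolic_shortcut:
  fixes x0 p y w :: "'a::metric_space"
  assumes "delta_hyperbolic \<delta> TYPE('a)"
    and "dist y x0 = R" and "gromov_product x0 p y \<le> c"
    and "dist w p = R" and "gromov_product x0 p w \<le> c"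
    and "2 * R \<le> dist x0 p"
  shows "dist y w \<le> dist x0 p - 2 * R + 4 * c + 2 * \<delta>"
proof -
  have "gromov_product y w x0 \<ge> min (gromov_product y p x0) (gromov_product p w x0) - \<delta>"
    using assms(1) unfolding delta_hyperbolic_def by blast
  moreover have "gromov_product y p x0 \<ge> R - c"
    using assms(2,3) unfolding gromov_product_def by (simp add: dist_commute)
  moreover have "gromov_product p w x0 \<ge> R - c"
    using assms(4,5,6) gromov_product_nonneg[of x0 p w] dist_triangle[of x0 p w]
    unfolding gromov_product_def by (simp add: dist_commute)
  ultimately have "gromov_product y w x0 \<ge> R - c - \<delta>" by linarith
  moreover have "dist w x0 \<le> dist x0 p - R + 2 * c"
    using assms(4,5) unfolding gromov_product_def by (simp add: dist_commute)
  ultimately show ?thesis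
    using assms(2) unfolding gromov_product_def by (simp add: dist_commute)
qed

lemma isometric_action_dist:
  "isometric_action G \<phi> \<Longrightarrow> g \<in> carrier G \<Longrightarrow> dist (\<phi> g x) (\<phi> g y) = dist x y"
  unfolding isometric_action_def by blast

lemma isometric_action_gromov_product:
  "isometric_action G \<phi> \<Longrightarrow> g \<in> carrier G \<Longrightarrow>
    gromov_product (\<phi> g p) (\<phi> g q) (\<phi> g x) = gromov_product p q x"
  unfolding gromov_product_def by (simp add: isometric_action_dist)

lemma isometric_action_inv_cancel:
  assumes "isometric_action G \<phi>" and "g \<in> carrier G"
  shows "\<phi> g (\<phi> (inv\<^bsub>G\<^esub> g) x) = x"
proof -
  interpret group G using assms(1) unfolding isometric_action_def by blast
  interpret group_action G UNIV \<phi> using assms(1) unfolding isometric_action_def by blast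
  have "\<phi> g (\<phi> (inv\<^bsub>G\<^esub> g) x) = \<phi> (g \<otimes>\<^bsub>G\<^esub> inv\<^bsub>G\<^esub> g) x"
    using composition_rule[of x g "inv\<^bsub>G\<^esub> g"] assms(2) by simp
  also have "\<dots> = x"
    using assms(2) id_eq_one by (metis UNIV_I r_inv restrict_apply')
  finally show ?thesis .
qed

lemma displacement_le_add:
  assumes "isometric_action G \<phi>" and "g \<in> carrier G"
  shows "dist (\<phi> g y) y \<le> dist (\<phi> g x) x + 2 * dist x y"
  using dist_triangle[of "\<phi> g y" y "\<phi> g x"] dist_triangle[of "\<phi> g x" y x]
    isometric_action_dist[OF assms, of y x]
  by (simp add: dist_commute)

lemma displacement_drop_near_sphere:
  fixes x0 y z y0 :: "'a::metric_space"
  assumes hyp: "delta_hyperbolic \<delta> TYPE('a)" and act: "isometric_action G \<phi>"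
    and g: "g \<in> carrier G"
    and "dist y x0 = R" and "dist z x0 = R" and "2 * R \<le> dist (\<phi> g x0) x0"
    and "gromov_product x0 (\<phi> g x0) y \<le> c"
    and "gromov_product x0 (\<phi> (inv\<^bsub>G\<^esub> g) x0) z \<le> c"
    and "dist y y0 \<le> r" and "dist z y0 \<le> r"
  shows "dist (\<phi> g y0) y0 \<le> dist (\<phi> g x0) x0 - 2 * R + 2 * r + 4 * c + 2 * \<delta>"
proof -
  have "gromov_product x0 (\<phi> g x0) (\<phi> g z) = gromov_product x0 (\<phi> (inv\<^bsub>G\<^esub> g) x0) z"
    using isometric_action_gromov_product[OF act g, of "\<phi> (inv\<^bsub>G\<^esub> g) x0" x0 z]
    by (simp add: isometric_action_inv_cancel[OF act g] gromov_product_commute)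
  moreover have "dist (\<phi> g z) (\<phi> g x0) = R"
    using assms(5) isometric_action_dist[OF act g] by simp
  ultimately have "dist y (\<phi> g z) \<le> dist x0 (\<phi> g x0) - 2 * R + 4 * c + 2 * \<delta>"
    using delta_hyperbolic_shortcut[OF hyp, of y x0 R "\<phi> g x0" c "\<phi> g z"] assms(4,6-8)
    by (simp add: dist_commute)
  moreover have "dist (\<phi> g y0) (\<phi> g z) \<le> r"
    using assms(10) isometric_action_dist[OF act g, of y0 z] by (simp add: dist_commute)
  moreover have "dist (\<phi> g y0) y0 \<le> dist (\<phi> g y0) (\<phi> g z) + dist (\<phi> g z) y + dist y y0"
    using dist_triangle[of "\<phi> g y0" y0 y] dist_triangle[of "\<phi> g y0" y "\<phi> g z"] by linarith
  ultimately show ?thesis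
    using assms(9) by (simp add: dist_commute)
qed

lemma sum_le_sum_add_card:
  fixes f g :: "'a \<Rightarrow> real"
  assumes "finite U" and "W \<subseteq> U"
    and "\<And>u. u \<in> U \<Longrightarrow> f u \<le> g u + a"
    and "\<And>u. u \<in> W \<Longrightarrow> f u \<le> g u + a - b"
  shows "sum f U \<le> sum g U + a * card U - b * card W"
proof -
  have "sum f U \<le> (\<Sum>u\<in>U. g u + a - (if u \<in> W then b else 0))"
    using assms(3,4) by (intro sum_mono) auto
  also have "\<dots> = sum g U + a * card U - b * card W"
    using assms(1,2) by (simp add: sum.distrib sum_subtractf sum.If_cases Int_absorb1 mult.commute)
  finally show ?thesis .
qed

lemma energy_le_mean_displacement:
  "energy \<phi> U \<le> (\<Sum>u\<in>U. dist (\<phi> u x) x) / real (card U)"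
  unfolding energy_def
  by (rule cINF_lower) (auto intro!: bdd_belowI2[where m=0] divide_nonneg_nonneg sum_nonneg)

lemma displacement_drop_card_bound:
  assumes "finite U" and "U \<noteq> {}" and "W \<subseteq> U"
    and "(\<Sum>u\<in>U. dist (\<phi> u x) x) / real (card U) \<le> energy \<phi> U + \<epsilon>"
    and "\<And>u. u \<in> U \<Longrightarrow> dist (\<phi> u y) y \<le> dist (\<phi> u x) x + a"
    and "\<And>u. u \<in> W \<Longrightarrow> dist (\<phi> u y) y \<le> dist (\<phi> u x) x + a - b"
  shows "b * real (card W) \<le> (a + \<epsilon>) * real (card U)"
proof -
  have n: "real (card U) > 0" using assms(1,2) by (simp add: card_gt_0_iff)
  have "real (card U) * energy \<phi> U \<le> (\<Sum>u\<in>U. dist (\<phi> u y) y)"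
    using energy_le_mean_displacement[of \<phi> U y] n by (simp add: field_simps)
  also have "\<dots> \<le> (\<Sum>u\<in>U. dist (\<phi> u x) x) + a * real (card U) - b * real (card W)"
    by (rule sum_le_sum_add_card[OF assms(1,3,5,6)])
  also have "(\<Sum>u\<in>U. dist (\<phi> u x) x) \<le> real (card U) * (energy \<phi> U + \<epsilon>)"
    using assms(4) n by (simp add: field_simps)
  finally show ?thesis by (simp add: algebra_simps)
qed

lemma U_yz_displacement_drop:
  fixes x0 y0 y z :: "'a::metric_space"
  assumes hyp: "delta_hyperbolic \<delta> TYPE('a)" and act: "isometric_action G \<phi>"
    and "U \<subseteq> carrier G" and "\<delta> > 0" and "d \<ge> 1"
    and "y \<in> cball y0 (100 * d * \<delta>) \<inter> sphere_at x0 (1000 * d * \<delta>)"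
    and "z \<in> cball y0 (100 * d * \<delta>) \<inter> sphere_at x0 (1000 * d * \<delta>)"
    and "u \<in> U_yz G \<phi> U x0 d \<delta> y z"
  shows "dist (\<phi> u y0) y0 \<le> dist (\<phi> u x0) x0 - 1794 * d * \<delta>"
proof -
  have "\<delta> \<le> d * \<delta>" and "0 < d * \<delta>" using assms(4,5) by simp_all
  then have "dist (\<phi> u y0) y0 \<le> dist (\<phi> u x0) x0 - 2 * (1000 * d * \<delta>)
      + 2 * (100 * d * \<delta>) + 4 * (d * \<delta>) + 2 * \<delta>"
    using assms(3,6-8)
    by (intro displacement_drop_near_sphere[OF hyp act, where y = y and z = z])
      (auto simp: U_yz_def sphere_at_def dist_commute mult.assoc simp del: zero_less_mult_iff)
  then show ?thesis using \<open>\<delta> \<le> d * \<delta>\<close> by linarith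
qed

theorem lemma6p2:
  fixes \<delta> d :: real and G :: "('g, 'b) monoid_scheme" and \<phi> :: "'g \<Rightarrow> 'a::metric_space \<Rightarrow> 'a"
    and U :: "'g set" and x0 y0 :: 'a
  assumes "\<delta> > 0"
    and "geodesic_space TYPE('a)"
    and "delta_hyperbolic \<delta> TYPE('a)"
    and "isometric_action G \<phi>"
    and "U \<subseteq> carrier G" and "finite U" and "U \<noteq> {}"
    and "(\<Sum>u\<in>U. dist (\<phi> u x0) x0) / real (card U) \<le> energy \<phi> U + \<delta>"
    and "d = 1 \<or> d = log 2 (2 * real (card U))"
    and "y0 \<in> sphere_at x0 (1000 * d * \<delta>)"
  shows "real (card (\<Union>y\<in>cball y0 (100 * d * \<delta>) \<inter> sphere_at x0 (1000 * d * \<delta>).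
                     \<Union>z\<in>cball y0 (100 * d * \<delta>) \<inter> sphere_at x0 (1000 * d * \<delta>).
                       U_yz G \<phi> U x0 d \<delta> y z))
         \<le> 2 / 3 * real (card U)"
proof -
  define S where "S = cball y0 (100 * d * \<delta>) \<inter> sphere_at x0 (1000 * d * \<delta>)"
  define W where "W = (\<Union>y\<in>S. \<Union>z\<in>S. U_yz G \<phi> U x0 d \<delta> y z)"
  have "card U \<ge> 1" using assms(6,7) by (simp add: Suc_leI card_gt_0_iff)
  then have "d \<ge> 1" using assms(9) by auto
  have "dist x0 y0 = 1000 * d * \<delta>"
    using assms(10) unfolding sphere_at_def by (simp add: dist_commute)
  then have "dist (\<phi> u y0) y0 \<le> dist (\<phi> u x0) x0 + 2000 * d * \<delta>" if "u \<in> U" for u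
    using displacement_le_add[OF assms(4), of u y0 x0] assms(5) that by auto
  moreover have "dist (\<phi> u y0) y0 \<le> dist (\<phi> u x0) x0 + 2000 * d * \<delta> - 3794 * d * \<delta>"
    if "u \<in> W" for u
  proof -
    obtain y z where "y \<in> S" "z \<in> S" "u \<in> U_yz G \<phi> U x0 d \<delta> y z"
      using \<open>u \<in> W\<close> unfolding W_def by blast
    then have "dist (\<phi> u y0) y0 \<le> dist (\<phi> u x0) x0 - 1794 * d * \<delta>"
      unfolding S_def by (rule U_yz_displacement_drop[OF assms(3,4,5,1) \<open>d \<ge> 1\<close>])
    then show ?thesis by (simp add: algebra_simps)
  qed
  moreover have "W \<subseteq> U" unfolding W_def U_yz_def by auto
  ultimately have "3794 * d * \<delta> * real (card W) \<le> (2000 * d * \<delta> + \<delta>) * real (card U)"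
    by (intro displacement_drop_card_bound[OF assms(6,7) _ assms(8)])
  also have "\<dots> \<le> 2001 * d * \<delta> * real (card U)"
    using \<open>d \<ge> 1\<close> assms(1) by (intro mult_right_mono) auto
  finally have "3794 * real (card W) \<le> 2001 * real (card U)"
    using \<open>d \<ge> 1\<close> assms(1) by simp
  then show ?thesis unfolding W_def S_def by linarith
qed

end
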